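(* On an interface element $T$ on which the IFE shape functions are unisolvent, for $s=\pm$ (with $s'$ the opposite sign), the $2\times4$ matrix functions $$\Lambda_s(X)=\sum_{i\in\mathcal I}(A_i-X)^T\otimes\Phi^s_{i}(X)+\sum_{i\in\mathcal I^{s'}}\big((A_i-\overline X_i)^T\otimes\Phi^s_{i}(X)\big)(\overline M^s-I_4)$$ do not depend on the choice of the points $\overline X_i\in l$, $i\in\mathcal I^{s'}$.
   Context: Lamé parameters $\lambda^\pm,\mu^\pm>0$; stress $\sigma^s(\mathbf v)=\lambda^s(\nabla\cdot\mathbf v)I+2\mu^s\epsilon(\mathbf v)$. $T$ is a triangle with $\Pi_T=[\mathrm{span}\{1,x,y\}]^2$ and nodes its vertices, or a square with $\Pi_T=[\mathrm{span}\{1,x,y,xy\}]^2$ and nodes its vertices, or a square with $\Pi_T=[\mathrm{span}\{1,x,y,x^2-y^2\}]^2$ and nodes its edge midpoints; $\mathcal I$ the node index set. $\Gamma$ meets $\partial T$ at $D,E$; $l$ is the line through them with unit normal $\bar{\mathbf n}=(\bar n_1,\bar n_2)$; $l$ splits $T$ into $\overline T^\pm$; $\mathcal I^s=\{i:A_i\in T\cap\Omega^s\}$. IFE shape functions $\boldsymbol\phi_{i,T}$ ($1\le i\le2|\mathcal I|$) are the piecewise functions $\boldsymbol\phi^s\in\Pi_T$ on $\overline T^s$, continuous across $l$, with (bilinear/rotated $Q_1$) equal coefficient vectors of $xy$ (resp. $x^2-y^2$), satisfying $\sigma^+(\boldsymbol\phi^+)(F)\bar{\mathbf n}=\sigma^-(\boldsymbol\phi^-)(F)\bar{\mathbf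 n}$ at a fixed $F\in l$, with $\boldsymbol\phi_{i,T}(A_j)=(\delta_{ij},0)^T$ ($i\le|\mathcal I|$), $(0,\delta_{i-|\mathcal I|,j})^T$ ($i>|\mathcal I|$). $\Phi_{i,T}=[\boldsymbol\phi_{i,T},\boldsymbol\phi_{i+|\mathcal I|,T}]$ and $\Phi^s_i$ denotes the $2\times2$ matrix polynomial equal to $\Phi_{i,T}$ on $\overline T^s$. $\overline N^s$ is the $4\times4$ matrix with rows $((\lambda^s+2\mu^s)\bar n_1,\mu^s\bar n_2,\mu^s\bar n_2,\lambda^s\bar n_1)$, $(\lambda^s\bar n_2,\mu^s\bar n_1,\mu^s\bar n_1,(\lambda^s+2\mu^s)\bar n_2)$, $(-\bar n_2,0,\bar n_1,0)$, $(0,-\bar n_2,0,\bar n_1)$; $\overline M^-=(\overline N^+)^{-1}\overline N^-$, $\overline M^+=(\overline N^-)^{-1}\overline N^+$. $\otimes$ is the Kronecker product. *)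

theory Defs
  imports "HOL-Analysis.Analysis" "Jordan_Normal_Form.Gauss_Jordan_Elimination"
begin

type_synonym pt = "real \<times> real"

text \<open>The three element kinds: triangle with P1 (nodes = vertices), axis-aligned square
 with bilinear Q1 (nodes = vertices), axis-aligned square with rotated Q1 (nodes = edge midpoints).\<close>
datatype elem_kind = TriP1 | SqQ1 | SqRotQ1

fun pdim :: "elem_kind \<Rightarrow> nat" where
  "pdim TriP1 = 3" | "pdim SqQ1 = 4" | "pdim SqRotQ1 = 4"

fun nnodes :: "elem_kind \<Rightarrow> nat" where
  "nnodes TriP1 = 3" | "nnodes SqQ1 = 4" | "nnodes SqRotQ1 = 4"

fun pbasis :: "elem_kind \<Rightarrow> nat \<Rightarrow> pt \<Rightarrow> real" where
  "pbasis k j (x, y) =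
     (if j = 0 then 1 else if j = 1 then x else if j = 2 then y
      else if j = 3 then (case k of SqQ1 \<Rightarrow> x * y | SqRotQ1 \<Rightarrow> x^2 - y^2 | TriP1 \<Rightarrow> 0)
      else 0)"

definition pi_coeffs :: "elem_kind \<Rightarrow> (nat \<Rightarrow> pt) \<Rightarrow> (pt \<Rightarrow> pt) \<Rightarrow> bool" where
  "pi_coeffs k c phi \<longleftrightarrow> (\<forall>p. phi p = (\<Sum>j<pdim k. pbasis k j p *\<^sub>R c j))"

definition in_Pi2 :: "elem_kind \<Rightarrow> (pt \<Rightarrow> pt) \<Rightarrow> bool" where
  "in_Pi2 k phi \<longleftrightarrow> (\<exists>c. pi_coeffs k c phi)"

definition valid_elem :: "elem_kind \<Rightarrow> pt set \<Rightarrow> (nat \<Rightarrow> pt) \<Rightarrow> bool" where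
  "valid_elem k T A \<longleftrightarrow> inj_on A {..<nnodes k} \<and>
     (case k of
        TriP1 \<Rightarrow> \<not> collinear (A ` {..<3}) \<and> T = convex hull (A ` {..<3})
      | SqQ1 \<Rightarrow> (\<exists>x0 y0 h. h > 0 \<and> T = cbox (x0, y0) (x0 + h, y0 + h) \<and>
                 A ` {..<4} = {(x0, y0), (x0 + h, y0), (x0 + h, y0 + h), (x0, y0 + h)})
      | SqRotQ1 \<Rightarrow> (\<exists>x0 y0 h. h > 0 \<and> T = cbox (x0, y0) (x0 + h, y0 + h) \<and>
                 A ` {..<4} = {(x0 + h/2, y0), (x0 + h, y0 + h/2), (x0 + h/2, y0 + h), (x0, y0 + h/2)}))"

text \<open>Traction sigma^s(v)(F) n for Lame parameters lam, mu, with
  sigma(v) = lam (div v) I + 2 mu eps(v), eps(v) = (grad v + grad v^T)/2.\<close>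
definition traction :: "real \<Rightarrow> real \<Rightarrow> (pt \<Rightarrow> pt) \<Rightarrow> pt \<Rightarrow> pt \<Rightarrow> pt" where
  "traction lam mu v F n =
    (let Dv = frechet_derivative v (at F);
         v1x = fst (Dv (1, 0)); v2x = snd (Dv (1, 0));
         v1y = fst (Dv (0, 1)); v2y = snd (Dv (0, 1));
         dv = v1x + v2y; e12 = (v2x + v1y) / 2;
         s11 = lam * dv + 2 * mu * v1x; s22 = lam * dv + 2 * mu * v2y; s12 = 2 * mu * e12
     in (s11 * fst n + s12 * snd n, s12 * fst n + s22 * snd n))"

definition line_l :: "pt \<Rightarrow> pt \<Rightarrow> pt set" where
  "line_l D nb = {p. (p - D) \<bullet> nb = 0}"

text \<open>Evaluation of the piecewise function (phi+ on T+, phi- on T-), where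
  T+ is the side of l into which nb points.\<close>
definition pw_eval :: "pt \<Rightarrow> pt \<Rightarrow> (pt \<Rightarrow> pt) \<times> (pt \<Rightarrow> pt) \<Rightarrow> pt \<Rightarrow> pt" where
  "pw_eval D nb phis p = (if (p - D) \<bullet> nb \<ge> 0 then fst phis p else snd phis p)"

definition nodal_val :: "nat \<Rightarrow> nat \<Rightarrow> nat \<Rightarrow> pt" where
  "nodal_val nI i j = (if i < nI then (if i = j then 1 else 0, 0)
                       else (0, if i - nI = j then 1 else 0))"

definition ife_cond :: "elem_kind \<Rightarrow> pt set \<Rightarrow> (nat \<Rightarrow> pt) \<Rightarrow> pt \<Rightarrow> pt \<Rightarrow> pt \<Rightarrow>
    real \<Rightarrow> real \<Rightarrow> real \<Rightarrow> real \<Rightarrow> nat \<Rightarrow> (pt \<Rightarrow> pt) \<times> (pt \<Rightarrow> pt) \<Rightarrow> bool" where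
  "ife_cond k T A D nb F lp mp lm mm i phis \<longleftrightarrow>
     in_Pi2 k (fst phis) \<and> in_Pi2 k (snd phis) \<and>
     (\<forall>p \<in> T \<inter> line_l D nb. fst phis p = snd phis p) \<and>
     (k \<noteq> TriP1 \<longrightarrow> (\<exists>cp cm. pi_coeffs k cp (fst phis) \<and> pi_coeffs k cm (snd phis) \<and> cp 3 = cm 3)) \<and>
     traction lp mp (fst phis) F nb = traction lm mm (snd phis) F nb \<and>
     (\<forall>j < nnodes k. pw_eval D nb phis (A j) = nodal_val (nnodes k) i j)"

definition unisolvent :: "elem_kind \<Rightarrow> pt set \<Rightarrow> (nat \<Rightarrow> pt) \<Rightarrow> pt \<Rightarrow> pt \<Rightarrow> pt \<Rightarrow>
    real \<Rightarrow> real \<Rightarrow> real \<Rightarrow> real \<Rightarrow> bool" where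
  "unisolvent k T A D nb F lp mp lm mm \<longleftrightarrow>
     (\<forall>i < 2 * nnodes k. \<exists>!phis. ife_cond k T A D nb F lp mp lm mm i phis)"

definition shape_fun :: "elem_kind \<Rightarrow> pt set \<Rightarrow> (nat \<Rightarrow> pt) \<Rightarrow> pt \<Rightarrow> pt \<Rightarrow> pt \<Rightarrow>
    real \<Rightarrow> real \<Rightarrow> real \<Rightarrow> real \<Rightarrow> nat \<Rightarrow> (pt \<Rightarrow> pt) \<times> (pt \<Rightarrow> pt)" where
  "shape_fun k T A D nb F lp mp lm mm i = (THE phis. ife_cond k T A D nb F lp mp lm mm i phis)"

text \<open>Sign s: True = +, False = -.  Component of the polynomial phi^s.\<close>
definition side :: "bool \<Rightarrow> ('a \<times> 'a) \<Rightarrow> 'a" where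
  "side s pr = (if s then fst pr else snd pr)"

text \<open>Phi^s_i(X) = [phi^s_i(X), phi^s_{i+|I|}(X)] (2x2).\<close>
definition Phi_mat :: "elem_kind \<Rightarrow> pt set \<Rightarrow> (nat \<Rightarrow> pt) \<Rightarrow> pt \<Rightarrow> pt \<Rightarrow> pt \<Rightarrow>
    real \<Rightarrow> real \<Rightarrow> real \<Rightarrow> real \<Rightarrow> bool \<Rightarrow> nat \<Rightarrow> pt \<Rightarrow> real mat" where
  "Phi_mat k T A D nb F lp mp lm mm s i X =
     mat 2 2 (\<lambda>(r, c). (let v = side s (shape_fun k T A D nb F lp mp lm mm (i + c * nnodes k)) X
                        in if r = 0 then fst v else snd v))"

definition kron :: "'a::times mat \<Rightarrow> 'a mat \<Rightarrow> 'a mat" where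
  "kron P Q = mat (dim_row P * dim_row Q) (dim_col P * dim_col Q)
     (\<lambda>(i, j). P $$ (i div dim_row Q, j div dim_col Q) * Q $$ (i mod dim_row Q, j mod dim_col Q))"

definition row_vec :: "pt \<Rightarrow> real mat" where
  "row_vec p = mat_of_rows_list 2 [[fst p, snd p]]"

definition mat_sum :: "nat \<Rightarrow> nat \<Rightarrow> ('b \<Rightarrow> 'a::comm_monoid_add mat) \<Rightarrow> 'b set \<Rightarrow> 'a mat" where
  "mat_sum nr nc f S = mat nr nc (\<lambda>ij. \<Sum>i\<in>S. f i $$ ij)"

definition Nbar :: "real \<Rightarrow> real \<Rightarrow> pt \<Rightarrow> real mat" where
  "Nbar lam mu n = mat_of_rows_list 4
     [[(lam + 2 * mu) * fst n, mu * snd n, mu * snd n, lam * fst n],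
      [lam * snd n, mu * fst n, mu * fst n, (lam + 2 * mu) * snd n],
      [- snd n, 0, fst n, 0],
      [0, - snd n, 0, fst n]]"

definition Mbar :: "real \<Rightarrow> real \<Rightarrow> real \<Rightarrow> real \<Rightarrow> pt \<Rightarrow> bool \<Rightarrow> real mat" where
  "Mbar lp mp lm mm n s =
     (if s then the (mat_inverse (Nbar lm mm n)) * Nbar lp mp n
      else the (mat_inverse (Nbar lp mp n)) * Nbar lm mm n)"

definition node_side :: "elem_kind \<Rightarrow> pt set \<Rightarrow> (nat \<Rightarrow> pt) \<Rightarrow> pt set \<Rightarrow> nat set" where
  "node_side k T A Om = {i. i < nnodes k \<and> A i \<in> T \<inter> Om}"

definition Lambda :: "elem_kind \<Rightarrow> pt set \<Rightarrow> (nat \<Rightarrow> pt) \<Rightarrow> pt \<Rightarrow> pt \<Rightarrow> pt \<Rightarrow>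
    real \<Rightarrow> real \<Rightarrow> real \<Rightarrow> real \<Rightarrow> pt set \<Rightarrow> pt set \<Rightarrow> bool \<Rightarrow> pt \<Rightarrow> (nat \<Rightarrow> pt) \<Rightarrow> real mat" where
  "Lambda k T A D nb F lp mp lm mm Omp Omm s X Xb =
     mat_sum 2 4 (\<lambda>i. kron (row_vec (A i - X)) (Phi_mat k T A D nb F lp mp lm mm s i X)) {..<nnodes k}
     + mat_sum 2 4 (\<lambda>i. kron (row_vec (A i - Xb i)) (Phi_mat k T A D nb F lp mp lm mm s i X)
                        * (Mbar lp mp lm mm nb s - 1\<^sub>m 4))
         (node_side k T A (if s then Omm else Omp))"

end

theory Submission imports Defs "Jordan_Normal_Form.Determinant" begin

text \<open>The last two rows of \<open>Nbar\<close>, which encode the tangential derivative along \<open>l\<close>, do not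
  involve the Lame parameters. For \<open>w\<close> tangent to \<open>l\<close> one has \<open>w\<^sup>T \<otimes> \<Phi> = \<Phi> (w\<^sup>T \<otimes> I\<^sub>2)\<close>,
  and \<open>w\<^sup>T \<otimes> I\<^sub>2\<close> is a multiple of exactly these two rows; so it factors through both
  \<open>Nbar\<^sup>+\<close> and \<open>Nbar\<^sup>-\<close> and is fixed by \<open>Mbar\<^sup>s = (Nbar\<^sup>s\<^sup>')\<^sup>-\<^sup>1 Nbar\<^sup>s\<close>. Moving \<open>Xb\<^sub>i\<close>
  along \<open>l\<close> to \<open>Yb\<^sub>i\<close> therefore changes the \<open>i\<close>-th correction term by
  \<open>((Yb\<^sub>i - Xb\<^sub>i)\<^sup>T \<otimes> \<Phi>\<^sup>s\<^sub>i(X)) (Mbar\<^sup>s - I\<^sub>4) = 0\<close>.\<close>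

lemma unit_pair_sum_squares: "norm (n :: pt) = 1 \<Longrightarrow> fst n ^ 2 + snd n ^ 2 = 1"
  using norm_Pair[of "fst n" "snd n"] by simp

lemma row_vec_dims [simp]: "dim_row (row_vec p) = 1" "dim_col (row_vec p) = 2"
  by (auto simp: row_vec_def mat_of_rows_list_def)

lemma row_vec_index: "j < 2 \<Longrightarrow> row_vec p $$ (0, j) = (if j = 0 then fst p else snd p)"
  by (auto simp: row_vec_def mat_of_rows_list_def less_2_cases_iff)

lemma kron_dims [simp]:
  "dim_row (kron P Q) = dim_row P * dim_row Q" "dim_col (kron P Q) = dim_col P * dim_col Q"
  by (auto simp: kron_def)

lemma kron_row_vec_carrier: "Q \<in> carrier_mat 2 2 \<Longrightarrow> kron (row_vec w) Q \<in> carrier_mat 2 4"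
  by (auto intro: carrier_matI)

lemma kron_row_vec_index:
  assumes "i < 2" "j < 4" "Q \<in> carrier_mat 2 2"
  shows "kron (row_vec w) Q $$ (i, j) = (if j < 2 then fst w else snd w) * Q $$ (i, j mod 2)"
proof -
  have "j div 2 < 2" "j div 2 = 0 \<longleftrightarrow> j < 2" using assms by auto
  then show ?thesis using assms by (simp add: kron_def row_vec_index)
qed

lemma kron_row_vec_add:
  assumes Q: "Q \<in> carrier_mat 2 2"
  shows "kron (row_vec (u + v)) Q = kron (row_vec u) Q + kron (row_vec v) Q"
  using Q by (intro eq_matI) (auto simp: kron_row_vec_index[OF _ _ Q] algebra_simps)

lemma kron_row_vec_eq_mult_kron_one:
  assumes Q: "Q \<in> carrier_mat 2 2"
  shows "kron (row_vec w) Q = Q * kron (row_vec w) (1\<^sub>m 2)"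
proof (rule eq_matI)
  fix i j assume "i < dim_row (Q * kron (row_vec w) (1\<^sub>m 2))" "j < dim_col (Q * kron (row_vec w) (1\<^sub>m 2))"
  then have i: "i < 2" and j: "j < 4" using Q by auto
  have "(Q * kron (row_vec w) (1\<^sub>m 2)) $$ (i, j)
      = (\<Sum>k<2. Q $$ (i, k) * ((if j < 2 then fst w else snd w) * 1\<^sub>m 2 $$ (k, j mod 2)))"
    using i j Q by (simp add: scalar_prod_def kron_row_vec_index lessThan_atLeast0)
  also have "\<dots> = (if j < 2 then fst w else snd w) * Q $$ (i, j mod 2)"
  proof -
    have "j = 0 \<or> j = 1 \<or> j = 2 \<or> j = 3" using j by auto
    then show ?thesis by (elim disjE) (simp_all add: lessThan_nat_numeral)
  qed
  finally show "kron (row_vec w) Q $$ (i, j) = (Q * kron (row_vec w) (1\<^sub>m 2)) $$ (i, j)"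
    using kron_row_vec_index[OF i j Q] by simp
qed (use Q in auto)

lemma Nbar_carrier: "Nbar lam mu n \<in> carrier_mat 4 4"
  by (rule carrier_matI) (simp_all add: Nbar_def mat_of_rows_list_def)

lemma Nbar_index:
  assumes "i < 4" "j < 4"
  shows "Nbar lam mu n $$ (i, j) =
    [[(lam + 2 * mu) * fst n, mu * snd n, mu * snd n, lam * fst n],
     [lam * snd n, mu * fst n, mu * fst n, (lam + 2 * mu) * snd n],
     [- snd n, 0, fst n, 0],
     [0, - snd n, 0, fst n]] ! i ! j"
  using assms unfolding Nbar_def mat_of_rows_list_def by (subst index_mat) auto

text \<open>The tangential equations force \<open>(a, c)\<close> and \<open>(b, d)\<close> to be multiples \<open>\<alpha> n\<close>, \<open>\<beta> n\<close>; the
  traction equations then form a \<open>2\<times>2\<close> system for \<open>(\<alpha>, \<beta>)\<close> of determinant \<open>\<mu> (\<lambda> + 2\<mu>)\<close>.\<close>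
lemma Nbar_homogeneous_system_trivial:
  fixes a b c d lam mu :: real
  assumes n: "fst n ^ 2 + snd n ^ 2 = 1" and nondeg: "mu * (lam + 2 * mu) \<noteq> 0"
    and e1: "(lam + 2 * mu) * fst n * a + mu * snd n * b + mu * snd n * c + lam * fst n * d = 0"
    and e2: "lam * snd n * a + mu * fst n * b + mu * fst n * c + (lam + 2 * mu) * snd n * d = 0"
    and e3: "- snd n * a + fst n * c = 0"
    and e4: "- snd n * b + fst n * d = 0"
  shows "a = 0 \<and> b = 0 \<and> c = 0 \<and> d = 0"
proof -
  define n1 n2 where "n1 = fst n" and "n2 = snd n"
  have nn: "n1 * n1 + n2 * n2 = 1" using n by (simp add: n1_def n2_def power2_eq_square)
  define al be where "al = a * n1 + c * n2" and "be = b * n1 + d * n2"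
  have ha: "a = al * n1" and hc: "c = al * n2" and hb: "b = be * n1" and hd: "d = be * n2"
  proof -
    have "al * n1 = a * (n1 * n1 + n2 * n2)" "al * n2 = c * (n1 * n1 + n2 * n2)"
      "be * n1 = b * (n1 * n1 + n2 * n2)" "be * n2 = d * (n1 * n1 + n2 * n2)"
      using e3 e4 by (simp_all add: al_def be_def n1_def n2_def algebra_simps)
    then show "a = al * n1" "c = al * n2" "b = be * n1" "d = be * n2" using nn by simp_all
  qed
  define P Q R where "P = (lam + 2 * mu) * n1 * n1 + mu * n2 * n2"
    and "Q = (lam + mu) * n1 * n2" and "R = mu * n1 * n1 + (lam + 2 * mu) * n2 * n2"
  have f1: "al * P + be * Q = 0" using e1
    unfolding ha hb hc hd P_def Q_def n1_def n2_def by (simp add: algebra_simps)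
  have f2: "al * Q + be * R = 0" using e2
    unfolding ha hb hc hd R_def Q_def n1_def n2_def by (simp add: algebra_simps)
  have "P * R - Q * Q = mu * (lam + 2 * mu) * ((n1 * n1 + n2 * n2) * (n1 * n1 + n2 * n2))"
    unfolding P_def Q_def R_def by (simp add: algebra_simps)
  then have det: "P * R - Q * Q \<noteq> 0" using nn nondeg by simp
  have "al * (P * R - Q * Q) = R * (al * P + be * Q) - Q * (al * Q + be * R)"
    by (simp add: algebra_simps)
  then have "al = 0" using f1 f2 det by simp
  have "be * (P * R - Q * Q) = P * (al * Q + be * R) - Q * (al * P + be * Q)"
    by (simp add: algebra_simps)
  then have "be = 0" using f1 f2 det by simp
  then show ?thesis using \<open>al = 0\<close> ha hb hc hd by simp
qed

lemma det_Nbar_nonzero: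
  assumes n: "norm n = 1" and nondeg: "mu * (lam + 2 * mu) \<noteq> 0"
  shows "det (Nbar lam mu n) \<noteq> 0"
proof
  let ?N = "Nbar lam mu n"
  assume "det ?N = 0"
  then obtain v where v: "v \<in> carrier_vec 4" "v \<noteq> 0\<^sub>v 4" "?N *\<^sub>v v = 0\<^sub>v 4"
    using det_0_iff_vec_prod_zero[OF Nbar_carrier] by auto
  have row_eq: "(\<Sum>j<4. ?N $$ (i, j) * v $ j) = 0" if "i < 4" for i
  proof -
    have "Matrix.row ?N i \<bullet> v = (\<Sum>j<4. ?N $$ (i, j) * v $ j)"
      using that v(1) Nbar_carrier[of lam mu n]
      by (auto simp: scalar_prod_def lessThan_atLeast0 carrier_matD intro!: sum.cong)
    moreover have "Matrix.row ?N i \<bullet> v = 0"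
      using v(3) that Nbar_carrier by (metis carrier_matD(1) index_mult_mat_vec index_zero_vec(1))
    ultimately show ?thesis by simp
  qed
  have "v $ 0 = 0 \<and> v $ 1 = 0 \<and> v $ 2 = 0 \<and> v $ 3 = 0"
    using row_eq[of 0] row_eq[of 1] row_eq[of 2] row_eq[of 3]
    by (intro Nbar_homogeneous_system_trivial[OF unit_pair_sum_squares[OF n] nondeg])
      (simp_all add: lessThan_nat_numeral Nbar_index algebra_simps)
  then have "v = 0\<^sub>v 4" using v(1)
    by (intro eq_vecI) (auto simp: less_Suc_eq numeral_eq_Suc)
  with v(2) show False by simp
qed

lemma Nbar_inverse:
  assumes "norm n = 1" and "mu * (lam + 2 * mu) \<noteq> 0"
  shows "Nbar lam mu n * the (mat_inverse (Nbar lam mu n)) = 1\<^sub>m 4"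
    and "the (mat_inverse (Nbar lam mu n)) \<in> carrier_mat 4 4"
proof -
  let ?N = "Nbar lam mu n"
  have "?N \<in> Units (ring_mat TYPE(real) 4 undefined)"
    using det_non_zero_imp_unit[OF Nbar_carrier det_Nbar_nonzero[OF assms]] .
  then obtain B where B: "mat_inverse ?N = Some B"
    using mat_inverse(1)[OF Nbar_carrier[of lam mu n], of undefined] by fastforce
  show "?N * the (mat_inverse ?N) = 1\<^sub>m 4" "the (mat_inverse ?N) \<in> carrier_mat 4 4"
    using mat_inverse(2)[OF Nbar_carrier B] B by simp_all
qed

definition tangential_rows :: "real \<Rightarrow> real mat" where
  "tangential_rows c = mat 2 4 (\<lambda>(i, j). if j = i + 2 then c else 0)"

lemma tangential_rows_carrier: "tangential_rows c \<in> carrier_mat 2 4"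
  by (simp add: tangential_rows_def)

lemma tangential_rows_mult_index:
  assumes "i < 2" "j < 4" "N \<in> carrier_mat 4 4"
  shows "(tangential_rows c * N) $$ (i, j) = c * N $$ (i + 2, j)"
proof -
  have "(tangential_rows c * N) $$ (i, j) = (\<Sum>k\<in>{0..<4}. tangential_rows c $$ (i, k) * N $$ (k, j))"
    using assms by (simp add: tangential_rows_def scalar_prod_def)
  also have "\<dots> = (\<Sum>k\<in>{0..<4}. if k = i + 2 then c * N $$ (k, j) else 0)"
    using assms by (intro sum.cong) (auto simp: tangential_rows_def)
  also have "\<dots> = c * N $$ (i + 2, j)" using assms by (subst sum.delta) auto
  finally show ?thesis .
qed

lemma kron_tangent_one_eq_tangential_rows_mult_Nbar:
  fixes w n :: pt
  assumes wn: "w \<bullet> n = 0" and n: "norm n = 1"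
  shows "kron (row_vec w) (1\<^sub>m 2) = tangential_rows (snd w * fst n - fst w * snd n) * Nbar lam mu n"
proof -
  define c where "c = snd w * fst n - fst w * snd n"
  have orth: "fst w * fst n + snd w * snd n = 0" using wn by (simp add: inner_prod_def)
  have nn: "fst n ^ 2 + snd n ^ 2 = 1" using unit_pair_sum_squares[OF n] .
  have "- c * snd n = fst w * (fst n ^ 2 + snd n ^ 2) - fst n * (fst w * fst n + snd w * snd n)"
    "c * fst n = snd w * (fst n ^ 2 + snd n ^ 2) - snd n * (fst w * fst n + snd w * snd n)"
    by (simp_all add: c_def power2_eq_square algebra_simps)
  then have w: "fst w = - c * snd n" "snd w = c * fst n" unfolding orth nn by simp_all
  show ?thesis unfolding c_def[symmetric]
  proof (rule eq_matI)
    fix i j assume "i < dim_row (tangential_rows c * Nbar lam mu n)"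
      "j < dim_col (tangential_rows c * Nbar lam mu n)"
    then have i: "i < 2" and j: "j < 4" by (simp_all add: tangential_rows_def Nbar_def mat_of_rows_list_def)
    have "i = 0 \<or> i = 1" "j = 0 \<or> j = 1 \<or> j = 2 \<or> j = 3" using i j by auto
    then show "kron (row_vec w) (1\<^sub>m 2) $$ (i, j) = (tangential_rows c * Nbar lam mu n) $$ (i, j)"
      unfolding tangential_rows_mult_index[OF i j Nbar_carrier] kron_row_vec_index[OF i j one_carrier_mat] w
      by (elim disjE) (simp_all add: Nbar_index)
  qed (simp_all add: tangential_rows_def Nbar_def mat_of_rows_list_def)
qed

lemma kron_tangent_fixed_by_inverse_Nbar_mult_Nbar:
  fixes w n :: pt
  assumes wn: "w \<bullet> n = 0" and n: "norm n = 1" and Q: "Q \<in> carrier_mat 2 2"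
    and nondeg: "mu1 * (lam1 + 2 * mu1) \<noteq> 0"
  shows "kron (row_vec w) Q * (the (mat_inverse (Nbar lam1 mu1 n)) * Nbar lam2 mu2 n) = kron (row_vec w) Q"
proof -
  define T where "T = tangential_rows (snd w * fst n - fst w * snd n)"
  define B where "B = the (mat_inverse (Nbar lam1 mu1 n))"
  have K: "kron (row_vec w) Q = Q * (T * Nbar lam mu n)" for lam mu
    unfolding T_def kron_row_vec_eq_mult_kron_one[OF Q]
    by (simp only: kron_tangent_one_eq_tangential_rows_mult_Nbar[OF wn n, of lam mu])
  have B: "Nbar lam1 mu1 n * B = 1\<^sub>m 4" "B \<in> carrier_mat 4 4"
    unfolding B_def using Nbar_inverse[OF n nondeg] by simp_all
  have T: "T \<in> carrier_mat 2 4" unfolding T_def by (rule tangential_rows_carrier)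
  have N1: "Nbar lam1 mu1 n \<in> carrier_mat 4 4" and N2: "Nbar lam2 mu2 n \<in> carrier_mat 4 4"
    by (rule Nbar_carrier)+
  have BN2: "B * Nbar lam2 mu2 n \<in> carrier_mat 4 4" using B(2) N2 by (rule mult_carrier_mat)
  have "kron (row_vec w) Q * (B * Nbar lam2 mu2 n) = Q * (T * (Nbar lam1 mu1 n * (B * Nbar lam2 mu2 n)))"
    unfolding K[of lam1 mu1]
    using assoc_mult_mat[OF Q mult_carrier_mat[OF T N1] BN2] assoc_mult_mat[OF T N1 BN2] by simp
  also have "Nbar lam1 mu1 n * (B * Nbar lam2 mu2 n) = Nbar lam2 mu2 n"
    using assoc_mult_mat[OF N1 B(2) N2, symmetric] N2 unfolding B(1) by simp
  also have "Q * (T * Nbar lam2 mu2 n) = kron (row_vec w) Q" by (rule K[symmetric])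
  finally show ?thesis unfolding B_def .
qed

lemma Mbar_carrier:
  assumes "norm n = 1" and "lp > 0" "mp > 0" "lm > 0" "mm > 0"
  shows "Mbar lp mp lm mm n s \<in> carrier_mat 4 4"
proof -
  have "the (mat_inverse (Nbar l m n)) * Nbar l' m' n \<in> carrier_mat 4 4"
    if "m * (l + 2 * m) \<noteq> 0" for l m l' m'
    using Nbar_inverse(2)[OF assms(1) that] Nbar_carrier by (rule mult_carrier_mat)
  then show ?thesis using assms by (cases s) (simp_all add: Mbar_def)
qed

lemma kron_tangent_mult_Mbar:
  fixes w n :: pt
  assumes "w \<bullet> n = 0" "norm n = 1" "Q \<in> carrier_mat 2 2"
    and "lp > 0" "mp > 0" "lm > 0" "mm > 0"
  shows "kron (row_vec w) Q * Mbar lp mp lm mm n s = kron (row_vec w) Q"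
  using assms kron_tangent_fixed_by_inverse_Nbar_mult_Nbar[OF assms(1-3)]
  by (cases s) (simp_all add: Mbar_def)

lemma kron_row_vec_mult_minus_one_shift:
  assumes Q: "Q \<in> carrier_mat 2 2" and M: "M \<in> carrier_mat 4 4"
    and fixed: "kron (row_vec (y - x)) Q * M = kron (row_vec (y - x)) Q"
  shows "kron (row_vec (a - x)) Q * (M - 1\<^sub>m 4) = kron (row_vec (a - y)) Q * (M - 1\<^sub>m 4)"
proof -
  let ?P = "kron (row_vec (a - y)) Q" and ?R = "kron (row_vec (y - x)) Q"
  have P: "?P \<in> carrier_mat 2 4" and R: "?R \<in> carrier_mat 2 4"
    using Q by (simp_all add: kron_row_vec_carrier)
  have "kron (row_vec (a - x)) Q = ?P + ?R"
    using kron_row_vec_add[OF Q, of "a - y" "y - x"] by simp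
  then have "kron (row_vec (a - x)) Q * (M - 1\<^sub>m 4) = ?P * (M - 1\<^sub>m 4) + ?R * (M - 1\<^sub>m 4)"
    using add_mult_distrib_mat[OF P R minus_carrier_mat[OF one_carrier_mat]] by simp
  also have "?R * (M - 1\<^sub>m 4) = ?R * M - ?R * 1\<^sub>m 4"
    using mult_minus_distrib_mat[OF R M one_carrier_mat] .
  also have "?R * M - ?R * 1\<^sub>m 4 = 0\<^sub>m 2 4"
    unfolding fixed right_mult_one_mat[OF R] using R by (rule minus_r_inv_mat)
  also have "?P * (M - 1\<^sub>m 4) + 0\<^sub>m 2 4 = ?P * (M - 1\<^sub>m 4)"
    using mult_carrier_mat[OF P minus_carrier_mat[OF one_carrier_mat]] by (rule right_add_zero_mat)
  finally show ?thesis .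
qed

theorem mainTheorem13:
  fixes k :: elem_kind and T :: "pt set" and A :: "nat \<Rightarrow> pt"
    and Gam Omp Omm :: "pt set" and D E nb F :: pt
    and lp mp lm mm :: real
  assumes "valid_elem k T A"
    and "lp > 0" "mp > 0" "lm > 0" "mm > 0"
    and "Omp \<inter> Omm = {}" "Gam \<inter> Omp = {}" "Gam \<inter> Omm = {}"
    and "\<forall>j < nnodes k. A j \<in> Omp \<union> Omm"
    and "D \<noteq> E" "D \<in> Gam" "E \<in> Gam" "D \<in> frontier T" "E \<in> frontier T"
    and "norm nb = 1" "(E - D) \<bullet> nb = 0"
    and "F \<in> line_l D nb"
    and "unisolvent k T A D nb F lp mp lm mm"
  shows "\<forall>s X Xb Yb.
           (\<forall>i \<in> node_side k T A (if s then Omm else Omp). Xb i \<in> line_l D nb \<and> Yb i \<in> line_l D nb)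
           \<longrightarrow> Lambda k T A D nb F lp mp lm mm Omp Omm s X Xb
             = Lambda k T A D nb F lp mp lm mm Omp Omm s X Yb"
proof (intro allI impI)
  fix s X Xb Yb
  let ?S = "node_side k T A (if s then Omm else Omp)"
  let ?M = "Mbar lp mp lm mm nb s"
  let ?Phi = "\<lambda>i. Phi_mat k T A D nb F lp mp lm mm s i X"
  assume on_l: "\<forall>i \<in> ?S. Xb i \<in> line_l D nb \<and> Yb i \<in> line_l D nb"
  have Phi: "?Phi i \<in> carrier_mat 2 2" for i by (simp add: Phi_mat_def)
  have "kron (row_vec (A i - Xb i)) (?Phi i) * (?M - 1\<^sub>m 4)
      = kron (row_vec (A i - Yb i)) (?Phi i) * (?M - 1\<^sub>m 4)" if "i \<in> ?S" for i
  proof (rule kron_row_vec_mult_minus_one_shift[OF Phi Mbar_carrier])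
    have "(Yb i - Xb i) \<bullet> nb = 0"
      using on_l that by (auto simp: line_l_def inner_diff_left)
    then show "kron (row_vec (Yb i - Xb i)) (?Phi i) * ?M = kron (row_vec (Yb i - Xb i)) (?Phi i)"
      using kron_tangent_mult_Mbar Phi assms(2-5,15) by blast
  qed (use assms(2-5,15) in auto)
  then show "Lambda k T A D nb F lp mp lm mm Omp Omm s X Xb = Lambda k T A D nb F lp mp lm mm Omp Omm s X Yb"
    unfolding Lambda_def mat_sum_def by (simp cong: sum.cong)
qed

end
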